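(* Let $-1/2\le\lambda<1$ and $0\le\beta\le 2\lambda+1$. Then $C_\beta[f]\in\mathcal{S}$ for every $f\in\mathcal{S}^*(\lambda)$.
   Context: $\mathbb{D}$ is the open unit disk; $\mathcal{A}$ the class of analytic $f$ on $\mathbb{D}$ with $f(0)=0$, $f'(0)=1$; $\mathcal{S}\subset\mathcal{A}$ the univalent functions. For $\lambda<1$, $\mathcal{S}^*(\lambda)=\{f\in\mathcal{A}: f(z)\ne0 \text{ for } z\ne0,\ \mathrm{Re}\,(zf'(z)/f(z))>\lambda \text{ on }\mathbb{D}\}$. For $\beta\ge0$ and $f$ analytic on $\mathbb{D}$ with $f(0)=0$, the $\beta$-Cesàro transform is $C_\beta[f](z)=\int_0^z \frac{f(w)}{w(1-w)^\beta}\,dw$ (principal branch of $(1-w)^\beta$). *)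

theory Defs
  imports "HOL-Complex_Analysis.Complex_Analysis"
begin

definition classA :: "(complex \<Rightarrow> complex) \<Rightarrow> bool" where
  "classA f \<longleftrightarrow> f holomorphic_on ball 0 1 \<and> f 0 = 0 \<and> deriv f 0 = 1"

definition classS :: "(complex \<Rightarrow> complex) \<Rightarrow> bool" where
  "classS f \<longleftrightarrow> classA f \<and> inj_on f (ball 0 1)"

text \<open>Starlike functions of order lam. At z = 0 the quotient z f'(z)/f(z) is
  understood as its limit 1 > lam, so the condition is only imposed for z \<noteq> 0.\<close>
definition starlike_of_order :: "real \<Rightarrow> (complex \<Rightarrow> complex) \<Rightarrow> bool" where
  "starlike_of_order lam f \<longleftrightarrow> classA f \<and>
     (\<forall>z\<in>ball 0 1. z \<noteq> 0 \<longrightarrow> f z \<noteq> 0) \<and>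
     (\<forall>z\<in>ball 0 1. z \<noteq> 0 \<longrightarrow> Re (z * deriv f z / f z) > lam)"

text \<open>beta-Cesaro transform: integral along the segment from 0 to z, with the
  principal branch (1-w) powr beta = exp (beta * Ln (1-w)).\<close>
definition cesaro :: "real \<Rightarrow> (complex \<Rightarrow> complex) \<Rightarrow> complex \<Rightarrow> complex" where
  "cesaro beta f z = contour_integral (linepath 0 z)
      (\<lambda>w. f w / (w * (1 - w) powr complex_of_real beta))"

end

theory Submission
  imports Defs
begin

text \<open>
  The derivative of \<open>C\<^sub>\<beta>[f]\<close> is \<open>e\<^bsup>L\<^esup>\<close> with \<open>L(0) = 0\<close> and
  \<open>1 + zL' = zf'/f + \<beta> z/(1 - z)\<close>, whose real part exceeds \<open>\<lambda> - \<beta>/2 \<ge> -1/2\<close>.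
  So it suffices that a primitive \<open>F\<close> of \<open>e\<^bsup>L\<^esup>\<close> with \<open>Re (1 + zL') > -1/2\<close> is injective.
  With \<open>M = 2L/3\<close> a primitive \<open>\<psi>\<close> of \<open>e\<^bsup>M\<^esup>\<close> is a convex mapping: each circle
  \<open>|z| = r\<close> is mapped to a curve whose tangent turns monotonically through \<open>2\<pi>\<close>, so the curve
  lies left of all its tangents, and the argument principle shows that \<open>\<psi>\<close> takes every value of
  the intersection of these half-planes exactly once in \<open>|z| < r\<close> and no other value. Hence
  \<open>\<psi>\<close> is injective with convex image. Jack's lemma gives \<open>Re e\<^bsup>M/2\<^esup> > 0\<close>, and
  \<open>F' = \<psi>' e\<^bsup>M/2\<^esup>\<close>, so \<open>F \<circ> \<psi>\<^sup>-\<^sup>1\<close> has a derivative with positive real part on a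
  convex domain and is injective by the Noshiro-Warschawski argument.
\<close>

lemma has_vector_derivative_along_line:
  assumes "(F has_field_derivative D) (at (a + of_real t * b))"
  shows "((\<lambda>t. F (a + of_real t * b)) has_vector_derivative (b * D)) (at t)"
proof -
  have "((\<lambda>t. a + of_real t * b) has_vector_derivative b) (at t)"
    by (auto intro!: derivative_eq_intros)
  from field_vector_diff_chain_at[OF this assms] show ?thesis by (simp add: o_def)
qed

lemma has_vector_derivative_along_circle:
  assumes "(F has_field_derivative D) (at (c * cis t))"
  shows "((\<lambda>t. F (c * cis t)) has_vector_derivative (\<i> * c * cis t * D)) (at t)"
proof -
  have "((\<lambda>t. c * cis t) has_vector_derivative (\<i> * c * cis t)) (at t)"
  proof -
    have "((\<lambda>t. of_real t :: complex) has_vector_derivative 1) (at t)"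
      by (auto intro!: derivative_eq_intros)
    moreover have "((\<lambda>z. c * exp (\<i> * z)) has_field_derivative (\<i> * c * cis t)) (at (of_real t))"
      by (auto intro!: derivative_eq_intros simp: cis_conv_exp)
    ultimately show ?thesis
      using field_vector_diff_chain_at by (fastforce simp: o_def cis_conv_exp)
  qed
  from field_vector_diff_chain_at[OF this assms] show ?thesis by (simp add: o_def)
qed

lemma has_real_derivative_norm_power2:
  assumes "(f has_vector_derivative f') (at t)"
  shows "((\<lambda>t. (norm (f t))\<^sup>2) has_real_derivative 2 * Re (cnj (f t) * f')) (at t)"
proof -
  have "((\<lambda>t. (Re (f t))\<^sup>2 + (Im (f t))\<^sup>2) has_real_derivative
          (2 * Re (f t) * Re f' + 2 * Im (f t) * Im f')) (at t)"
    using assms by (auto intro!: derivative_eq_intros simp: algebra_simps)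
  then show ?thesis by (simp add: cmod_power2 algebra_simps)
qed

lemma Re_div_one_minus_gt_neg_half_iff:
  fixes z :: complex
  assumes "z \<noteq> 1"
  shows "Re (z / (1 - z)) > - 1/2 \<longleftrightarrow> norm z < 1"
proof -
  define u where "u = 1 - z"
  have u: "(Re u)\<^sup>2 + (Im u)\<^sup>2 > 0"
    using assms by (simp add: u_def complex_eq_iff sum_power2_gt_zero_iff)
  have "Re (z / (1 - z)) = Re u / ((Re u)\<^sup>2 + (Im u)\<^sup>2) - 1"
  proof -
    have "z / (1 - z) = 1 / u - 1" using assms by (simp add: u_def field_simps)
    then show ?thesis by (simp add: Re_divide cmod_power2)
  qed
  moreover have "norm z < 1 \<longleftrightarrow> (Re u)\<^sup>2 + (Im u)\<^sup>2 < 2 * Re u"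
  proof -
    have "(norm z)\<^sup>2 = (Re u - 1)\<^sup>2 + (Im u)\<^sup>2"
      by (simp add: u_def cmod_power2 power2_commute)
    then show ?thesis using abs_square_less_1[of "norm z"] by (simp add: power2_diff) argo
  qed
  moreover have "Re u / ((Re u)\<^sup>2 + (Im u)\<^sup>2) > 1/2 \<longleftrightarrow> (Re u)\<^sup>2 + (Im u)\<^sup>2 < 2 * Re u"
    using u by (simp add: field_simps)
  ultimately show ?thesis by linarith
qed

section \<open>Jack's lemma\<close>

lemma Im_cnj_mult_deriv_eq_0_if_max_on_circle:
  assumes "(\<omega> has_field_derivative d) (at z0)"
    and "\<And>t. norm (\<omega> (z0 * cis t)) \<le> norm (\<omega> z0)"
  shows "Im (cnj (\<omega> z0) * z0 * d) = 0"
proof -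
  have "(\<omega> has_field_derivative d) (at (z0 * cis 0))" using assms(1) by simp
  from has_real_derivative_norm_power2[OF has_vector_derivative_along_circle[OF this]]
  have "((\<lambda>t. (norm (\<omega> (z0 * cis t)))\<^sup>2) has_real_derivative
          2 * Re (cnj (\<omega> z0) * (\<i> * z0 * d))) (at 0)"
    by simp
  then have "2 * Re (cnj (\<omega> z0) * (\<i> * z0 * d)) = 0"
    by (rule DERIV_local_max[OF _ zero_less_one]) (use assms(2) in \<open>simp add: power_mono\<close>)
  then show ?thesis by (simp add: algebra_simps)
qed

lemma Re_cnj_mult_deriv_ge_if_radial_bound:
  assumes "(\<omega> has_field_derivative d) (at z0)"
    and radial: "\<And>t. 0 < t \<Longrightarrow> t < 1 \<Longrightarrow> norm (\<omega> (of_real t * z0)) \<le> t * norm (\<omega> z0)"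
  shows "Re (cnj (\<omega> z0) * z0 * d) \<ge> (norm (\<omega> z0))\<^sup>2"
proof (rule ccontr)
  define m where "m = norm (\<omega> z0)"
  assume "\<not> Re (cnj (\<omega> z0) * z0 * d) \<ge> (norm (\<omega> z0))\<^sup>2"
  then have neg: "2 * Re (cnj (\<omega> z0) * z0 * d) - 2 * m\<^sup>2 < 0" by (simp add: m_def)
  have "(\<omega> has_field_derivative d) (at (0 + of_real 1 * z0))" using assms(1) by simp
  from has_real_derivative_norm_power2[OF has_vector_derivative_along_line[OF this]]
  have "((\<lambda>t. (norm (\<omega> (of_real t * z0)))\<^sup>2) has_real_derivative
          2 * Re (cnj (\<omega> z0) * z0 * d)) (at 1)"
    by (simp add: mult.assoc)
  moreover have "((\<lambda>t. t\<^sup>2 * m\<^sup>2) has_real_derivative 2 * m\<^sup>2) (at 1)"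
    by (auto intro!: derivative_eq_intros)
  ultimately have "((\<lambda>t. (norm (\<omega> (of_real t * z0)))\<^sup>2 - t\<^sup>2 * m\<^sup>2) has_real_derivative
          2 * Re (cnj (\<omega> z0) * z0 * d) - 2 * m\<^sup>2) (at 1)"
    by (rule DERIV_diff)
  from DERIV_neg_dec_left[OF this neg] obtain e where "e > 0"
    and dec: "\<And>h. 0 < h \<Longrightarrow> h < e \<Longrightarrow>
      (norm (\<omega> (of_real 1 * z0)))\<^sup>2 - 1\<^sup>2 * m\<^sup>2 < (norm (\<omega> (of_real (1 - h) * z0)))\<^sup>2 - (1 - h)\<^sup>2 * m\<^sup>2"
    by blast
  define h where "h = min (e/2) (1/2)"
  have h: "0 < h" "h < e" "h < 1" using \<open>e > 0\<close> by (auto simp: h_def)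
  have "norm (\<omega> (of_real (1 - h) * z0)) \<le> (1 - h) * m"
    using radial[of "1 - h"] h by (simp add: m_def)
  then have "(norm (\<omega> (of_real (1 - h) * z0)))\<^sup>2 \<le> ((1 - h) * m)\<^sup>2"
    by (simp add: power_mono)
  then show False using dec[OF h(1,2)] by (simp add: m_def power_mult_distrib)
qed

lemma Schwarz_Lemma_rescaled:
  assumes hol: "\<omega> holomorphic_on ball 0 1" and "\<omega> 0 = 0" and R: "0 < R" "R \<le> 1"
    and bound: "\<And>u. norm u < R \<Longrightarrow> norm (\<omega> u) < m" and u: "norm u < R"
  shows "norm (\<omega> u) \<le> m * norm u / R"
proof -
  have "m > 0" using bound[of 0] R \<open>\<omega> 0 = 0\<close> by simp
  define h where "h = (\<lambda>\<zeta>. \<omega> (of_real R * \<zeta>) / of_real m)"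
  have "R * norm \<zeta> < 1" if "norm \<zeta> < 1" for \<zeta> :: complex
    using R that by (smt (verit) mult_left_le_one_le norm_ge_zero)
  then have "h holomorphic_on ball 0 1"
    unfolding h_def using R
    by (intro holomorphic_intros holomorphic_on_compose_gen[OF _ hol, unfolded o_def])
       (auto simp: norm_mult)
  moreover have "h 0 = 0" by (simp add: h_def \<open>\<omega> 0 = 0\<close>)
  moreover have "norm (h \<zeta>) < 1" if "norm \<zeta> < 1" for \<zeta>
    unfolding h_def using that R \<open>m > 0\<close> bound[of "of_real R * \<zeta>"]
    by (simp add: norm_mult norm_divide mult_less_cancel_left2)
  moreover have "norm (u / of_real R) < 1" using u R by (simp add: norm_divide)
  ultimately have "norm (h (u / of_real R)) \<le> norm (u / of_real R)"
    by (rule Schwarz_Lemma(1))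
  then show ?thesis using R \<open>m > 0\<close> by (simp add: h_def norm_divide field_simps)
qed

lemma Jack_Lemma:
  assumes hol: "\<omega> holomorphic_on ball 0 1" and "\<omega> 0 = 0" and z0: "z0 \<in> ball 0 1"
    and max: "\<And>u. norm u < norm z0 \<Longrightarrow> norm (\<omega> u) < norm (\<omega> z0)"
  shows "\<exists>k\<ge>1. z0 * deriv \<omega> z0 = of_real k * \<omega> z0"
proof (cases "z0 = 0")
  case True
  then show ?thesis using \<open>\<omega> 0 = 0\<close> by auto
next
  case False
  define m where "m = norm (\<omega> z0)"
  have "m > 0" using max[of 0] False \<open>\<omega> 0 = 0\<close> by (simp add: m_def)
  have "norm (\<omega> (z0 * cis t)) \<le> m" for t
  proof (rule continuous_le_on_closure[where S = "ball 0 (norm z0)" and f = "\<lambda>u. norm (\<omega> u)"])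
    have "closure (ball 0 (norm z0)) \<subseteq> ball (0 :: complex) 1" using False z0 by auto
    then show "continuous_on (closure (ball 0 (norm z0))) (\<lambda>u. norm (\<omega> u))"
      using hol by (auto intro!: continuous_intros holomorphic_on_imp_continuous_on
                    elim: holomorphic_on_subset)
  qed (use False max in \<open>auto simp: m_def norm_mult less_imp_le\<close>)
  moreover have "norm (\<omega> (of_real t * z0)) \<le> t * m" if "0 < t" "t < 1" for t
    using Schwarz_Lemma_rescaled[OF hol \<open>\<omega> 0 = 0\<close>, of "norm z0" m "of_real t * z0"]
      max that False z0
    by (simp add: m_def norm_mult mult.commute)
  moreover have "(\<omega> has_field_derivative deriv \<omega> z0) (at z0)"
    using hol z0 by (auto intro!: holomorphic_derivI)
  moreover define a where "a = cnj (\<omega> z0) * z0 * deriv \<omega> z0"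
  ultimately have "Im a = 0" and "Re a \<ge> m\<^sup>2"
    using Im_cnj_mult_deriv_eq_0_if_max_on_circle Re_cnj_mult_deriv_ge_if_radial_bound
    by (auto simp: m_def a_def)
  moreover have "z0 * deriv \<omega> z0 = a / m\<^sup>2 * \<omega> z0"
  proof -
    have "cnj (\<omega> z0) * \<omega> z0 = of_real (m\<^sup>2)"
      by (metis m_def complex_norm_square mult.commute of_real_power)
    then show ?thesis using \<open>m > 0\<close> by (simp add: a_def field_simps)
  qed
  ultimately show ?thesis
    using \<open>m > 0\<close> by (intro exI[of _ "Re a / m\<^sup>2"]) (simp add: complex_eq_iff field_simps)
qed

lemma least_norm_point_with_norm_ge:
  fixes \<omega> :: "complex \<Rightarrow> complex"
  assumes cont: "continuous_on (ball 0 1) \<omega>" and z: "z \<in> ball 0 1" "norm (\<omega> z) \<ge> c"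
  obtains z0 where "z0 \<in> ball 0 1" "norm (\<omega> z0) \<ge> c" "\<And>u. norm u < norm z0 \<Longrightarrow> norm (\<omega> u) < c"
proof -
  define A where "A = {u \<in> cball 0 (norm z). c \<le> norm (\<omega> u)}"
  have "cball 0 (norm z) \<subseteq> ball 0 1" using z by auto
  then have "closed A"
    unfolding A_def using cont
    by (intro continuous_on_closed_Collect_le)
       (auto intro!: continuous_intros elim: continuous_on_subset)
  moreover have "bounded A" by (rule bounded_subset[of "cball 0 (norm z)"]) (auto simp: A_def)
  moreover have "z \<in> A" using z by (simp add: A_def)
  ultimately obtain z0 where "z0 \<in> A" and least: "\<And>u. u \<in> A \<Longrightarrow> norm z0 \<le> norm u"
    using continuous_attains_inf[of A norm]
    by (auto simp: compact_eq_bounded_closed intro: continuous_intros)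
  show ?thesis
  proof
    show "z0 \<in> ball 0 1" "norm (\<omega> z0) \<ge> c" using \<open>z0 \<in> A\<close> z by (auto simp: A_def)
    show "norm (\<omega> u) < c" if "norm u < norm z0" for u
      using least[of u] that \<open>z0 \<in> A\<close> by (force simp: A_def)
  qed
qed

lemma Marx_Strohhacker_weak:
  assumes hol: "M holomorphic_on ball 0 1" and "M 0 = 0"
    and convex: "\<And>z. z \<in> ball 0 1 \<Longrightarrow> Re (1 + z * deriv M z) > 0"
    and z: "z \<in> ball 0 1"
  shows "Re (exp (M z / 2)) > 0"
proof (rule ccontr)
  assume neg: "\<not> Re (exp (M z / 2)) > 0"
  \<comment> \<open>\<open>|\<omega>| \<ge> 1\<close> where \<open>Re e\<^bsup>M/2\<^esup> \<le> 0\<close>; Jack's lemma at the first such point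
    contradicts convexity\<close>
  define \<omega> where "\<omega> = (\<lambda>u. 1 - exp (- M u / 2))"
  have \<omega>_hol: "\<omega> holomorphic_on ball 0 1"
    unfolding \<omega>_def using hol by (auto intro!: holomorphic_intros)
  have "Re (\<omega> z) \<ge> 1"
    using neg by (simp add: \<omega>_def exp_minus Re_complex_div_le_0 inverse_eq_divide)
  then have "norm (\<omega> z) \<ge> 1" using complex_Re_le_cmod order_trans by blast
  then obtain z0 where z0: "z0 \<in> ball 0 1" "norm (\<omega> z0) \<ge> 1"
    and "\<And>u. norm u < norm z0 \<Longrightarrow> norm (\<omega> u) < 1"
    using least_norm_point_with_norm_ge[OF holomorphic_on_imp_continuous_on[OF \<omega>_hol] z] by blast
  then obtain k where "k \<ge> 1" and k: "z0 * deriv \<omega> z0 = of_real k * \<omega> z0"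
    using Jack_Lemma[OF \<omega>_hol _ z0(1)] \<open>M 0 = 0\<close> by (force simp: \<omega>_def)
  have "deriv \<omega> z0 = deriv M z0 / 2 * (1 - \<omega> z0)"
    unfolding \<omega>_def using hol z0(1)
    by (intro DERIV_imp_deriv) (auto intro!: derivative_eq_intros holomorphic_derivI)
  then have "z0 * deriv M z0 * (1 - \<omega> z0) = 2 * (z0 * deriv \<omega> z0)" by (simp add: mult.commute)
  also have "\<dots> = 2 * of_real k * \<omega> z0" using k by simp
  finally have "z0 * deriv M z0 * (1 - \<omega> z0) = 2 * of_real k * \<omega> z0" .
  moreover have "1 - \<omega> z0 \<noteq> 0" by (simp add: \<omega>_def)
  ultimately have "z0 * deriv M z0 = (2 * k) *\<^sub>R (\<omega> z0 / (1 - \<omega> z0))"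
    by (simp add: eq_divide_eq scaleR_conv_of_real)
  then have "Re (1 + z0 * deriv M z0) = 1 + 2 * k * Re (\<omega> z0 / (1 - \<omega> z0))"
    by simp
  moreover have "Re (\<omega> z0 / (1 - \<omega> z0)) \<le> - 1/2"
    using Re_div_one_minus_gt_neg_half_iff[of "\<omega> z0"] z0(2) \<open>1 - \<omega> z0 \<noteq> 0\<close> by force
  then have "k * Re (\<omega> z0 / (1 - \<omega> z0)) \<le> k * (- 1/2)"
    using \<open>k \<ge> 1\<close> by (intro mult_left_mono) auto
  ultimately have "Re (1 + z0 * deriv M z0) \<le> 1 - k" by linarith
  then show False using convex[OF z0(1)] \<open>k \<ge> 1\<close> by simp
qed

section \<open>Winding numbers of image circles\<close>

lemma convex_insert_zero_upper_halfplane: "convex (insert 0 {z :: complex. Im z > 0})"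
  unfolding convex_def
proof (intro ballI allI impI)
  fix x y :: complex and a b :: real
  assume "x \<in> insert 0 {z. Im z > 0}" "y \<in> insert 0 {z. Im z > 0}"
    and "0 \<le> a" "0 \<le> b" "a + b = 1"
  then consider "a *\<^sub>R x = 0" "b *\<^sub>R y = 0" | "Im (a *\<^sub>R x) > 0" "Im (b *\<^sub>R y) \<ge> 0"
    | "Im (a *\<^sub>R x) \<ge> 0" "Im (b *\<^sub>R y) > 0"
    by (auto simp: order.order_iff_strict)
  then show "a *\<^sub>R x + b *\<^sub>R y \<in> insert 0 {z. Im z > 0}"
    by cases auto
qed

lemma convex_vimage_affine_complex:
  fixes c T :: complex
  assumes "convex S" "T \<noteq> 0"
  shows "convex {u. (u - c) / T \<in> S}"
proof -
  have "{u. (u - c) / T \<in> S} = (\<lambda>z. c + T * z) ` S"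
  proof (intro set_eqI iffI)
    fix u assume "u \<in> {u. (u - c) / T \<in> S}"
    then show "u \<in> (\<lambda>z. c + T * z) ` S"
      using assms(2) by (intro image_eqI[of _ _ "(u - c) / T"]) auto
  qed (use assms(2) in auto)
  also have "\<dots> = (\<lambda>z. c + z) ` (\<lambda>z. T * z) ` S" by (simp add: image_image)
  finally show ?thesis
    using assms(1) by (simp add: convex_translation convex_linear_image)
qed

lemma not_in_segment_if_Re_div_pos:
  assumes "Re ((c - w) / E) > 0"
  shows "w \<notin> closed_segment c (w + E)"
proof
  assume "w \<in> closed_segment c (w + E)"
  then obtain a :: real where a: "0 \<le> a" "a \<le> 1" and "(1 - a) *\<^sub>R c + a *\<^sub>R (w + E) = w"
    by (auto simp: closed_segment_def)
  then have "(1 - a) *\<^sub>R (c - w) + a *\<^sub>R E = 0"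
    by (simp add: algebra_simps scaleR_conv_of_real)
  moreover have "((1 - a) *\<^sub>R (c - w) + a *\<^sub>R E) / E = (1 - a) *\<^sub>R ((c - w) / E) + a *\<^sub>R 1"
    using assms by (auto simp: scaleR_conv_of_real add_divide_distrib)
  ultimately have "Re ((1 - a) *\<^sub>R ((c - w) / E) + a *\<^sub>R 1) = 0" by simp
  then have "(1 - a) * Re ((c - w) / E) + a = 0" by simp
  moreover have "(1 - a) * Re ((c - w) / E) + a > 0"
    using a assms by (cases "a = 0") (auto intro: add_nonneg_pos)
  ultimately show False by simp
qed

lemma winding_number_comp_circlepath:
  assumes hol: "F holomorphic_on ball 0 1" and r: "0 < r" "r < 1" and w: "w \<notin> F ` sphere 0 r"
  shows "winding_number (F \<circ> circlepath 0 r) w =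
    contour_integral (circlepath 0 r) (\<lambda>z. deriv F z / (F z - w)) / (2 * pi * \<i>)"
proof -
  have an: "F analytic_on ball 0 1" using hol by (simp add: analytic_on_open)
  have circ: "path_image (circlepath 0 r) \<subseteq> ball 0 1" using r by auto
  have "winding_number (F \<circ> circlepath 0 r) w =
      1 / (2 * pi * \<i>) * contour_integral (F \<circ> circlepath 0 r) (\<lambda>u. 1 / (u - w))"
    using w r valid_path_compose_analytic[OF valid_path_circlepath an circ]
    by (intro winding_number_valid_path) (auto simp: path_image_compose)
  also have "contour_integral (F \<circ> circlepath 0 r) (\<lambda>u. 1 / (u - w)) =
      contour_integral (circlepath 0 r) (\<lambda>z. deriv F z / (F z - w))"
    by (simp add: contour_integral_comp_analyticW[OF an valid_path_circlepath circ])
  finally show ?thesis by (simp add: o_def)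
qed

lemma winding_number_circlepath_eq_card_zeros:
  assumes hol: "f holomorphic_on ball 0 1" and r: "0 < r" "r < \<rho>" "\<rho> \<le> 1"
    and fin: "finite {p \<in> ball 0 \<rho>. f p = 0}"
    and simple: "\<And>p. p \<in> ball 0 1 \<Longrightarrow> f p = 0 \<Longrightarrow> deriv f p \<noteq> 0"
    and nonzero: "0 \<notin> f ` sphere 0 r"
  shows "winding_number (f \<circ> circlepath 0 r) 0 = card {p \<in> ball 0 r. f p = 0}"
proof -
  define pz where "pz = {p \<in> ball 0 \<rho>. f p = 0}"
  have circ: "path_image (circlepath 0 r) \<subseteq> ball 0 \<rho> - pz"
    using r nonzero by (auto simp: pz_def)
  have "contour_integral (circlepath 0 r) (\<lambda>z. deriv f z * 1 / f z) =
      2 * pi * \<i> * (\<Sum>p\<in>pz. winding_number (circlepath 0 r) p * 1 * zorder f p)"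
  proof -
    have pz: "{z \<in> ball 0 \<rho>. f z = 0 \<or> z \<in> {}} = pz" by (simp add: pz_def)
    have "f holomorphic_on ball 0 \<rho> - {}" using hol r by (auto elim!: holomorphic_on_subset)
    moreover have "\<forall>z. z \<notin> ball 0 \<rho> \<longrightarrow> winding_number (circlepath 0 r) z = 0"
      using r by (auto intro!: winding_number_zero_outside[of _ "cball 0 r"])
    ultimately show ?thesis
      using argument_principle[where S="ball 0 \<rho>" and f=f and poles="{}" and h="\<lambda>_. 1"
          and g="circlepath 0 r", unfolded pz] circ fin
      by (simp add: pz_def)
  qed
  also have "(\<Sum>p\<in>pz. winding_number (circlepath 0 r) p * 1 * zorder f p) =
      (\<Sum>p\<in>pz. if p \<in> ball 0 r then 1 else 0)"
  proof (rule sum.cong)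
    fix p assume p: "p \<in> pz"
    then have "zorder f p = 1"
      using r simple by (intro zorder_zero_eqI[OF hol open_ball]) (auto simp: pz_def)
    moreover have "norm p \<noteq> r" using p circ by auto
    ultimately show "winding_number (circlepath 0 r) p * 1 * zorder f p =
        (if p \<in> ball 0 r then 1 else 0)"
      using r
      by (auto intro!: winding_number_circlepath winding_number_zero_outside[of _ "cball 0 r"])
  qed simp
  also have "\<dots> = card {p \<in> ball 0 r. f p = 0}"
    using fin r by (simp add: sum.If_cases pz_def) (auto intro!: arg_cong[of _ _ card])
  finally show ?thesis
    using winding_number_comp_circlepath[OF hol r(1) _ nonzero] r by simp
qed

lemma winding_number_circlepath_mult_exp:
  assumes hol: "M holomorphic_on ball 0 1" and r: "0 < r" "r < 1"
  shows "winding_number ((\<lambda>z. w + z * exp (M z)) \<circ> circlepath 0 r) w = 1"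
proof -
  define f where "f = (\<lambda>z. z * exp (M z))"
  have zeros: "{p \<in> ball 0 \<rho>. f p = 0} = {0}" if "\<rho> > 0" for \<rho> :: real
    using that by (auto simp: f_def)
  have "winding_number (f \<circ> circlepath 0 r) 0 = card {p \<in> ball 0 r. f p = 0}"
  proof (rule winding_number_circlepath_eq_card_zeros[where \<rho> = 1])
    show "f holomorphic_on ball 0 1" unfolding f_def using hol by (intro holomorphic_intros)
    show "deriv f p \<noteq> 0" if "p \<in> ball 0 1" "f p = 0" for p
    proof -
      have "p = 0" using that by (simp add: f_def)
      moreover have "(f has_field_derivative exp (M 0)) (at 0)"
        unfolding f_def using hol by (auto intro!: derivative_eq_intros holomorphic_derivI)
      ultimately show ?thesis by (simp add: DERIV_imp_deriv)
    qed
  qed (use r zeros in \<open>auto simp: f_def\<close>)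
  then show ?thesis using r zeros by (simp add: f_def o_def winding_number_offset[of _ w])
qed

section \<open>Convex mappings\<close>

lemma pos_between_if_deriv_sin_of_increasing_angle:
  fixes h \<rho> \<Phi> :: "real \<Rightarrow> real"
  assumes deriv: "\<And>s. (h has_real_derivative \<rho> s * sin (\<Phi> s)) (at s)"
    and \<rho>: "\<And>s. \<rho> s > 0" and mono: "\<And>s s'. s < s' \<Longrightarrow> \<Phi> s < \<Phi> s'"
    and "h a = 0" "h b = 0" "\<Phi> a = 0" "\<Phi> b = 2 * pi"
    and t: "a < t" "t < b"
  shows "h t > 0"
proof (cases "\<Phi> t \<le> pi")
  case True
  obtain \<xi> where \<xi>: "a < \<xi>" "\<xi> < t" "h t - h a = (t - a) * (\<rho> \<xi> * sin (\<Phi> \<xi>))"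
    using MVT2[OF t(1), of h "\<lambda>s. \<rho> s * sin (\<Phi> s)"] deriv by blast
  have "0 < \<Phi> \<xi>" "\<Phi> \<xi> < pi" using mono[OF \<xi>(1)] mono[OF \<xi>(2)] True \<open>\<Phi> a = 0\<close> by auto
  then have "sin (\<Phi> \<xi>) > 0" by (rule sin_gt_zero)
  then show ?thesis using \<xi> t \<rho>[of \<xi>] \<open>h a = 0\<close> by simp
next
  case False
  obtain \<xi> where \<xi>: "t < \<xi>" "\<xi> < b" "h b - h t = (b - t) * (\<rho> \<xi> * sin (\<Phi> \<xi>))"
    using MVT2[OF t(2), of h "\<lambda>s. \<rho> s * sin (\<Phi> s)"] deriv by blast
  have "pi < \<Phi> \<xi>" "\<Phi> \<xi> < 2 * pi" using mono[OF \<xi>(1)] mono[OF \<xi>(2)] False \<open>\<Phi> b = 2 * pi\<close> by auto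
  then have "sin (\<Phi> \<xi> - pi) > 0" by (intro sin_gt_zero) auto
  then have "(b - t) * (\<rho> \<xi> * sin (\<Phi> \<xi>)) < 0"
    using t \<rho>[of \<xi>] by (simp add: sin_diff mult_pos_neg)
  then show ?thesis using \<xi> \<open>h b = 0\<close> by simp
qed

lemma rcis_add_2pi_int: "rcis r (t + 2 * pi * of_int k) = rcis r t"
  by (simp add: rcis_def flip: cis_mult)

lemma circlepath_eq_rcis: "circlepath 0 r s = rcis r (2 * pi * s)"
  by (simp add: circlepath rcis_def cis_conv_exp mult_ac)

lemma sphere_eq_range_rcis: "r \<ge> 0 \<Longrightarrow> sphere 0 r = range (rcis r)"
proof -
  assume "r \<ge> 0"
  then have "sphere 0 r = circlepath 0 r ` {0..1}"
    by (metis path_image_circlepath_nonneg path_image_def)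
  also have "\<dots> \<subseteq> range (rcis r)" by (auto simp: circlepath_eq_rcis)
  finally show ?thesis using \<open>r \<ge> 0\<close> by auto
qed

text \<open>\<open>\<psi>' = e\<^bsup>M\<^esup>\<close>, so the convexity condition \<open>Re (1 + z \<psi>''/\<psi>') > 0\<close> reads
  \<open>Re (1 + z M') > 0\<close>.\<close>

locale convex_mapping =
  fixes M \<psi> :: "complex \<Rightarrow> complex"
  assumes M_holomorphic: "M holomorphic_on ball 0 1"
    and Re_pos: "\<And>z. z \<in> ball 0 1 \<Longrightarrow> Re (1 + z * deriv M z) > 0"
    and psi_deriv: "\<And>z. z \<in> ball 0 1 \<Longrightarrow> (\<psi> has_field_derivative exp (M z)) (at z)"
begin

lemma psi_holomorphic: "\<psi> holomorphic_on ball 0 1"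
  using psi_deriv holomorphic_on_open[OF open_ball] by blast

lemma deriv_psi: "z \<in> ball 0 1 \<Longrightarrow> deriv \<psi> z = exp (M z)"
  by (rule DERIV_imp_deriv[OF psi_deriv])

lemma M_deriv: "z \<in> ball 0 1 \<Longrightarrow> (M has_field_derivative deriv M z) (at z)"
  using M_holomorphic by (auto intro!: holomorphic_derivI)

lemma finite_preimage_cball:
  assumes "\<rho> < 1"
  shows "finite {p \<in> cball 0 \<rho>. \<psi> p = w}"
proof -
  have nonconst: "\<not> (\<lambda>z. \<psi> z - w) constant_on ball 0 1"
  proof
    assume "(\<lambda>z. \<psi> z - w) constant_on ball 0 1"
    then obtain k where "\<And>z. z \<in> ball 0 1 \<Longrightarrow> \<psi> z = w + k"
      by (auto simp: constant_on_def algebra_simps)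
    then have "((\<lambda>z. w + k) has_field_derivative exp (M 0)) (at 0)"
      by (intro has_field_derivative_transform_within_open[OF psi_deriv, of _ "ball 0 1"]) auto
    then have "exp (M 0) = 0" using DERIV_const DERIV_unique by blast
    then show False by simp
  qed
  have "(\<lambda>z. \<psi> z - w) holomorphic_on ball 0 1"
    using psi_holomorphic by (intro holomorphic_intros)
  moreover have "cball 0 \<rho> \<subseteq> ball 0 1" using assms by auto
  ultimately have "finite {p \<in> cball 0 \<rho>. \<psi> p - w = 0}"
    using holomorphic_compact_finite_zeros[OF _ open_ball connected_ball compact_cball _ nonconst]
    by blast
  then show ?thesis by simp
qed

lemma exists_radius_avoiding:
  assumes "finite W" "m < 1"
  obtains r where "m < r" "r < 1" "\<And>w. w \<in> W \<Longrightarrow> w \<notin> \<psi> ` sphere 0 r"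
proof -
  define \<rho> where "\<rho> = (m + 1) / 2"
  have \<rho>: "m < \<rho>" "\<rho> < 1" using assms by (auto simp: \<rho>_def)
  define Z where "Z = (\<Union>w\<in>W. {p \<in> cball 0 \<rho>. \<psi> p = w})"
  have "finite (norm ` Z)"
    unfolding Z_def using assms(1) finite_preimage_cball[OF \<rho>(2)] by auto
  moreover have "infinite {m<..<\<rho>}" using \<rho> by simp
  ultimately obtain r where r: "r \<in> {m<..<\<rho>}" "r \<notin> norm ` Z"
    by (metis finite_subset subsetI)
  show ?thesis
  proof
    show "m < r" "r < 1" using r \<rho> by auto
    show "w \<notin> \<psi> ` sphere 0 r" if "w \<in> W" for w
      using r that by (force simp: Z_def)
  qed
qed

definition tangent :: "real \<Rightarrow> real \<Rightarrow> complex" where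
  "tangent r t = \<i> * rcis r t * exp (M (rcis r t))"

definition left_halfplane :: "real \<Rightarrow> real \<Rightarrow> complex set" where
  "left_halfplane r t = {w. Im ((w - \<psi> (rcis r t)) / tangent r t) > 0}"

text \<open>Up to the constant \<open>\<pi>/2\<close>, the argument of \<open>tangent r t\<close>.\<close>

definition tangent_angle :: "real \<Rightarrow> real \<Rightarrow> real" where
  "tangent_angle r t = t + Im (M (rcis r t))"

lemma tangent_angle_strict_mono:
  assumes "\<bar>r\<bar> < 1" "a < b"
  shows "tangent_angle r a < tangent_angle r b"
proof (rule DERIV_pos_imp_increasing[OF assms(2)])
  fix s
  have "((\<lambda>s. Im (M (rcis r s))) has_real_derivative Im (\<i> * rcis r s * deriv M (rcis r s))) (at s)"
    using has_vector_derivative_along_circle[OF M_deriv, of "of_real r" s] assms(1)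
    by (intro has_field_derivative_Im) (simp_all add: rcis_def norm_mult mult.assoc)
  from DERIV_add[OF DERIV_ident this]
  have "(tangent_angle r has_real_derivative Re (1 + rcis r s * deriv M (rcis r s))) (at s)"
    by (simp add: tangent_angle_def[abs_def])
  then show "\<exists>y. (tangent_angle r has_real_derivative y) (at s) \<and> y > 0"
    using Re_pos[of "rcis r s"] assms(1) by auto
qed

lemma tangent_angle_add_2pi: "tangent_angle r (t + 2 * pi) = tangent_angle r t + 2 * pi"
  using rcis_add_2pi_int[of r t 1] by (simp add: tangent_angle_def)

lemma tangent_div_tangent:
  assumes "r \<noteq> 0"
  shows "tangent r s / tangent r t =
    exp (Re (M (rcis r s)) - Re (M (rcis r t))) * cis (tangent_angle r s - tangent_angle r t)"
  using assms
  by (simp add: tangent_def tangent_angle_def rcis_def exp_eq_polar[of "M _"] exp_diff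
      cis_divide[symmetric] field_simps cis_mult add_ac)

lemma image_circle_in_left_halfplane:
  assumes r: "0 < r" "r < 1" and t: "t0 < t" "t < t0 + 2 * pi"
  shows "\<psi> (rcis r t) \<in> left_halfplane r t0"
proof -
  define T where "T = tangent r t0"
  have "T \<noteq> 0" using r by (simp add: T_def tangent_def)
  \<comment> \<open>a multiple of the signed distance from the tangent line at \<open>t0\<close>\<close>
  define h where "h = (\<lambda>s. Im ((\<psi> (rcis r s) - \<psi> (rcis r t0)) / T))"
  define \<Phi> where "\<Phi> = (\<lambda>s. tangent_angle r s - tangent_angle r t0)"
  define \<rho> where "\<rho> = (\<lambda>s. exp (Re (M (rcis r s)) - Re (M (rcis r t0))))"
  have "(h has_real_derivative \<rho> s * sin (\<Phi> s)) (at s)" for s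
  proof -
    have "((\<lambda>u. (\<psi> u - \<psi> (rcis r t0)) / T) has_field_derivative exp (M (rcis r s)) / T)
        (at (of_real r * cis s))"
      using psi_deriv[of "rcis r s"] r \<open>T \<noteq> 0\<close>
      by (auto intro!: derivative_eq_intros simp: rcis_def norm_mult)
    from has_field_derivative_Im[OF has_vector_derivative_along_circle[OF this]]
    have "(h has_real_derivative Im (tangent r s / T)) (at s)"
      by (simp add: h_def tangent_def rcis_def mult.assoc)
    then show ?thesis
      using r by (simp add: T_def tangent_div_tangent \<rho>_def \<Phi>_def)
  qed
  moreover have "h t0 = 0" "h (t0 + 2 * pi) = 0"
    using rcis_add_2pi_int[of r t0 1] by (simp_all add: h_def)
  moreover have "\<Phi> t0 = 0" "\<Phi> (t0 + 2 * pi) = 2 * pi"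
    by (simp_all add: \<Phi>_def tangent_angle_add_2pi)
  ultimately have "h t > 0"
    using tangent_angle_strict_mono r t
    by (intro pos_between_if_deriv_sin_of_increasing_angle[of h \<rho> \<Phi> t0 "t0 + 2 * pi"])
       (auto simp: \<rho>_def \<Phi>_def)
  then show ?thesis by (simp add: left_halfplane_def h_def T_def)
qed

lemma image_circle_subset_left_halfplane:
  assumes "0 < r" "r < 1"
  shows "\<psi> (rcis r t) \<in> insert (\<psi> (rcis r t0)) (left_halfplane r t0)"
proof -
  define k where "k = \<lfloor>(t - t0) / (2 * pi)\<rfloor>"
  define t' where "t' = t - 2 * pi * of_int k"
  have "of_int k \<le> (t - t0) / (2 * pi)" "(t - t0) / (2 * pi) < of_int k + 1"
    unfolding k_def by linarith+
  then have t': "t0 \<le> t'" "t' < t0 + 2 * pi"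
    by (auto simp: t'_def field_simps)
  have "rcis r t = rcis r t'" using rcis_add_2pi_int[of r t' k] by (simp add: t'_def)
  then show ?thesis
    using image_circle_in_left_halfplane[OF assms _ t'(2)] t'(1) by (cases "t' = t0") auto
qed

lemma winding_number_eq_card_preimage:
  assumes r: "0 < r" "r < 1" and w: "w \<notin> \<psi> ` sphere 0 r"
  shows "winding_number (\<psi> \<circ> circlepath 0 r) w = card {p \<in> ball 0 r. \<psi> p = w}"
proof -
  define f where "f = (\<lambda>z. \<psi> z - w)"
  have "winding_number (f \<circ> circlepath 0 r) 0 = card {p \<in> ball 0 r. f p = 0}"
  proof (rule winding_number_circlepath_eq_card_zeros)
    show "f holomorphic_on ball 0 1"
      unfolding f_def using psi_holomorphic by (intro holomorphic_intros)
    show "deriv f p \<noteq> 0" if "p \<in> ball 0 1" for p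
      unfolding f_def using psi_deriv[OF that]
      by (subst DERIV_imp_deriv) (auto intro!: derivative_eq_intros)
    show "finite {p \<in> ball 0 ((r + 1) / 2). f p = 0}"
      using r
      by (intro finite_subset[OF _ finite_preimage_cball[of "(r + 1) / 2" w]]) (auto simp: f_def)
  qed (use r w in \<open>auto simp: f_def\<close>)
  then show ?thesis by (simp add: f_def o_def winding_number_offset[symmetric])
qed

lemma valid_path_psi_circlepath: "\<bar>r\<bar> < 1 \<Longrightarrow> valid_path (\<psi> \<circ> circlepath 0 r)"
  using psi_holomorphic
  by (intro valid_path_compose_analytic[OF valid_path_circlepath, of _ "ball 0 1"])
     (auto simp: analytic_on_open)

lemma winding_number_eq_0_if_not_in_left_halfplane:
  assumes r: "0 < r" "r < 1" and w: "w \<notin> \<psi> ` sphere 0 r" "w \<notin> left_halfplane r t0"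
  shows "winding_number (\<psi> \<circ> circlepath 0 r) w = 0"
proof -
  define c where "c = \<psi> (rcis r t0)"
  define T where "T = tangent r t0"
  define H where "H = {u. (u - c) / T \<in> insert 0 {z. Im z > 0}}"
  have "T \<noteq> 0" using r by (simp add: T_def tangent_def)
  have "w \<noteq> c" using w(1) r by (auto simp: c_def)
  show ?thesis
  proof (rule winding_number_zero_outside[OF valid_path_imp_path[OF valid_path_psi_circlepath]])
    show "convex H"
      unfolding H_def using \<open>T \<noteq> 0\<close>
      by (intro convex_vimage_affine_complex convex_insert_zero_upper_halfplane)
    show "w \<notin> H"
      using w(2) \<open>w \<noteq> c\<close> \<open>T \<noteq> 0\<close> by (auto simp: H_def left_halfplane_def c_def T_def)
    show "path_image (\<psi> \<circ> circlepath 0 r) \<subseteq> H"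
      using image_circle_subset_left_halfplane[OF r, of _ t0]
      by (auto simp: H_def c_def T_def left_halfplane_def path_image_def circlepath_eq_rcis)
  qed (use r in \<open>auto simp: pathfinish_compose pathstart_compose\<close>)
qed

lemma winding_number_eq_1_if_in_all_left_halfplanes:
  assumes r: "0 < r" "r < 1" and w: "\<And>t. w \<in> left_halfplane r t"
  shows "winding_number (\<psi> \<circ> circlepath 0 r) w = 1"
proof -
  \<comment> \<open>\<open>w\<close> left of every tangent means \<open>Re ((\<psi> z - w) / (z \<psi>' z)) > 0\<close>, so the straight
    homotopy to \<open>w + z \<psi>' z\<close> avoids \<open>w\<close>\<close>
  define F where "F = (\<lambda>z. w + z * exp (M z))"
  have "homotopic_loops (- {w}) (\<psi> \<circ> circlepath 0 r) (F \<circ> circlepath 0 r)"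
  proof (rule homotopic_loops_linear)
    have "F analytic_on ball 0 1"
      unfolding F_def analytic_on_open[OF open_ball]
      using M_holomorphic by (intro holomorphic_intros)
    then show "path (F \<circ> circlepath 0 r)"
      using r
      by (intro valid_path_imp_path valid_path_compose_analytic[OF valid_path_circlepath]) auto
    fix s :: real
    define t where "t = 2 * pi * s"
    define E where "E = rcis r t * exp (M (rcis r t))"
    have "(w - \<psi> (rcis r t)) / (\<i> * E) = \<i> * ((\<psi> (rcis r t) - w) / E)"
      by (cases "E = 0") (simp_all add: field_simps)
    moreover have "Im ((w - \<psi> (rcis r t)) / (\<i> * E)) > 0"
      using w[of t] by (simp add: left_halfplane_def tangent_def E_def mult.assoc)
    ultimately have "Re ((\<psi> (rcis r t) - w) / E) > 0"
      by (simp only: Im_i_times)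
    then show "closed_segment ((\<psi> \<circ> circlepath 0 r) s) ((F \<circ> circlepath 0 r) s) \<subseteq> - {w}"
      using not_in_segment_if_Re_div_pos by (auto simp: F_def E_def circlepath_eq_rcis t_def)
  qed (use r valid_path_psi_circlepath in
      \<open>auto simp: pathfinish_compose pathstart_compose valid_path_imp_path\<close>)
  then show ?thesis
    using winding_number_homotopic_loops winding_number_circlepath_mult_exp[OF M_holomorphic r]
    by (fastforce simp: F_def)
qed

lemma card_preimage_ball:
  assumes r: "0 < r" "r < 1" and w: "w \<notin> \<psi> ` sphere 0 r"
  shows "card {p \<in> ball 0 r. \<psi> p = w} = (if \<forall>t. w \<in> left_halfplane r t then 1 else 0)"
  using winding_number_eq_card_preimage[OF r w] winding_number_eq_1_if_in_all_left_halfplanes[OF r]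
    winding_number_eq_0_if_not_in_left_halfplane[OF r w]
  by (metis of_nat_1 of_nat_eq_iff of_nat_0)

lemma image_ball_iff_in_all_left_halfplanes:
  assumes r: "0 < r" "r < 1" and w: "w \<notin> \<psi> ` sphere 0 r"
  shows "w \<in> \<psi> ` ball 0 r \<longleftrightarrow> (\<forall>t. w \<in> left_halfplane r t)"
proof -
  have "finite {p \<in> ball 0 r. \<psi> p = w}"
    by (rule finite_subset[OF _ finite_preimage_cball[OF r(2), of w]]) auto
  then have "w \<in> \<psi> ` ball 0 r \<longleftrightarrow> card {p \<in> ball 0 r. \<psi> p = w} \<noteq> 0"
    by (auto simp: card_eq_0_iff)
  then show ?thesis using card_preimage_ball[OF r w] by simp
qed

lemma inj_on_psi: "inj_on \<psi> (ball 0 1)"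
proof (rule inj_onI, rule ccontr)
  fix z1 z2 assume z: "z1 \<in> ball 0 1" "z2 \<in> ball 0 1" "\<psi> z1 = \<psi> z2" "z1 \<noteq> z2"
  have m: "0 \<le> max (norm z1) (norm z2)" "max (norm z1) (norm z2) < 1"
    using z by (auto simp: le_max_iff_disj)
  obtain r where r: "max (norm z1) (norm z2) < r" "r < 1" "\<And>w. w \<in> {\<psi> z1} \<Longrightarrow> w \<notin> \<psi> ` sphere 0 r"
    by (rule exists_radius_avoiding[where W="{\<psi> z1}", OF _ m(2)]) auto
  have "0 < r" using m(1) r(1) by linarith
  have "finite {p \<in> ball 0 r. \<psi> p = \<psi> z1}"
    by (rule finite_subset[OF _ finite_preimage_cball[OF r(2)]]) auto
  moreover have "{z1, z2} \<subseteq> {p \<in> ball 0 r. \<psi> p = \<psi> z1}" using z r by auto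
  ultimately have "card {z1, z2} \<le> card {p \<in> ball 0 r. \<psi> p = \<psi> z1}" by (rule card_mono)
  also have "\<dots> \<le> 1" using card_preimage_ball[OF \<open>0 < r\<close> r(2) r(3)] by simp
  finally show False using z(4) by simp
qed

lemma convex_image: "convex (\<psi> ` ball 0 1)"
  unfolding convex_contains_segment
proof (intro ballI)
  fix v1 v2 assume "v1 \<in> \<psi> ` ball 0 1" "v2 \<in> \<psi> ` ball 0 1"
  then obtain z1 z2 where z: "z1 \<in> ball 0 1" "z2 \<in> ball 0 1" "v1 = \<psi> z1" "v2 = \<psi> z2" by auto
  have m: "0 \<le> max (norm z1) (norm z2)" "max (norm z1) (norm z2) < 1"
    using z by (auto simp: le_max_iff_disj)
  obtain r where r: "max (norm z1) (norm z2) < r" "r < 1" "\<And>w. w \<in> {v1, v2} \<Longrightarrow> w \<notin> \<psi> ` sphere 0 r"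
    by (rule exists_radius_avoiding[where W="{v1, v2}", OF _ m(2)]) auto
  have "0 < r" using m(1) r(1) by linarith
  define K where "K = (\<Inter>t. left_halfplane r t)"
  have "convex K"
    unfolding K_def left_halfplane_def using convex_halfspace_Im_gt[of 0] \<open>0 < r\<close>
    by (intro convex_INT ballI convex_vimage_affine_complex[of "{z. Im z > 0}", simplified])
       (auto simp: tangent_def)
  moreover have "v \<in> K" if "v \<in> {v1, v2}" for v
  proof -
    have "v \<in> \<psi> ` ball 0 r" using that z r(1) by auto
    then show ?thesis
      using image_ball_iff_in_all_left_halfplanes[OF \<open>0 < r\<close> r(2) r(3)[OF that]]
      by (simp add: K_def)
  qed
  moreover have "K \<subseteq> \<psi> ` ball 0 1"
  proof
    fix u assume u: "u \<in> K"
    have "u \<notin> \<psi> ` sphere 0 r"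
    proof
      assume "u \<in> \<psi> ` sphere 0 r"
      then obtain t where "u = \<psi> (rcis r t)" using \<open>0 < r\<close> by (auto simp: sphere_eq_range_rcis)
      then have "u \<notin> left_halfplane r t" by (simp add: left_halfplane_def)
      then show False using u by (simp add: K_def)
    qed
    then have "u \<in> \<psi> ` ball 0 r"
      using image_ball_iff_in_all_left_halfplanes[OF \<open>0 < r\<close> r(2)] u by (auto simp: K_def)
    then show "u \<in> \<psi> ` ball 0 1" using r by auto
  qed
  ultimately show "closed_segment v1 v2 \<subseteq> \<psi> ` ball 0 1"
    using closed_segment_subset[of v1 K v2] by blast
qed
end

section \<open>Close-to-convex functions\<close>

lemma holomorphic_primitive_ball:
  assumes "f holomorphic_on ball c r"
  obtains g where "\<And>z. z \<in> ball c r \<Longrightarrow> (g has_field_derivative f z) (at z)"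
proof -
  obtain g where "\<And>z. z \<in> ball c r \<Longrightarrow> (g has_field_derivative f z) (at z within ball c r)"
    using holomorphic_convex_primitive'[OF convex_ball open_ball assms] by metis
  then show ?thesis using that at_within_open[OF _ open_ball] by metis
qed

lemma Noshiro_Warschawski:
  assumes "convex S"
    and deriv: "\<And>v. v \<in> S \<Longrightarrow> (H has_field_derivative H' v) (at v)"
    and pos: "\<And>v. v \<in> S \<Longrightarrow> Re (H' v) > 0"
  shows "inj_on H S"
proof (rule inj_onI, rule ccontr)
  fix v1 v2 assume v: "v1 \<in> S" "v2 \<in> S" "H v1 = H v2" "v1 \<noteq> v2"
  define p where "p = (\<lambda>t. v1 + of_real t * (v2 - v1))"
  have p: "p t \<in> S" if "0 \<le> t" "t \<le> 1" for t
  proof -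
    have "p t = (1 - t) *\<^sub>R v1 + t *\<^sub>R v2"
      by (simp add: p_def scaleR_conv_of_real algebra_simps)
    then show ?thesis using convexD[OF \<open>convex S\<close> v(1,2)] that by simp
  qed
  define u where "u = (\<lambda>t. Re (H (p t) / (v2 - v1)))"
  have "(u has_real_derivative Re (H' (p t))) (at t)" if "0 \<le> t" "t \<le> 1" for t
  proof -
    have "((\<lambda>v. H v / (v2 - v1)) has_field_derivative H' (p t) / (v2 - v1)) (at (p t))"
      using deriv[OF p[OF that]] by (rule DERIV_cdivide)
    from has_field_derivative_Re[OF has_vector_derivative_along_line[OF this[unfolded p_def]]]
    show ?thesis using v(4) by (simp add: u_def p_def)
  qed
  then obtain \<xi> where "0 < \<xi>" "\<xi> < 1" and "u 1 - u 0 = (1 - 0) * Re (H' (p \<xi>))"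
    using MVT2[OF zero_less_one, of u "\<lambda>t. Re (H' (p t))"] by blast
  moreover have "u 1 = u 0" using v(3) by (simp add: u_def p_def)
  ultimately show False using pos[OF p[of \<xi>]] by simp
qed

lemma close_to_convex_inj_on:
  assumes \<psi>_hol: "\<psi> holomorphic_on ball 0 1" and "inj_on \<psi> (ball 0 1)" and "convex (\<psi> ` ball 0 1)"
    and F_deriv: "\<And>z. z \<in> ball 0 1 \<Longrightarrow> (F has_field_derivative deriv \<psi> z * p z) (at z)"
    and p_pos: "\<And>z. z \<in> ball 0 1 \<Longrightarrow> Re (p z) > 0"
  shows "inj_on F (ball 0 1)"
proof -
  obtain g where g_hol: "g holomorphic_on \<psi> ` ball 0 1"
    and g_deriv: "\<And>z. z \<in> ball 0 1 \<Longrightarrow> deriv \<psi> z * deriv g (\<psi> z) = 1"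
    and g: "\<And>z. z \<in> ball 0 1 \<Longrightarrow> g (\<psi> z) = z"
    by (rule holomorphic_has_inverse[OF \<psi>_hol open_ball \<open>inj_on \<psi> (ball 0 1)\<close>]) iprover
  have "open (\<psi> ` ball 0 1)"
    by (rule open_mapping_thm3[OF \<psi>_hol open_ball \<open>inj_on \<psi> (ball 0 1)\<close>])
  have "((F \<circ> g) has_field_derivative p (g v)) (at v)" if "v \<in> \<psi> ` ball 0 1" for v
  proof -
    from that obtain z where z: "z \<in> ball 0 1" "v = \<psi> z" by blast
    have "(g has_field_derivative deriv g v) (at v)"
      using holomorphic_derivI[OF g_hol \<open>open (\<psi> ` ball 0 1)\<close> that] .
    with F_deriv[OF z(1)] have "((F \<circ> g) has_field_derivative deriv \<psi> z * p z * deriv g v) (at v)"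
      using g z by (intro DERIV_chain) simp_all
    moreover have "deriv \<psi> z * p z * deriv g v = (deriv \<psi> z * deriv g (\<psi> z)) * p z"
      by (simp add: z mult_ac)
    ultimately have "((F \<circ> g) has_field_derivative p z) (at v)"
      by (simp only: g_deriv[OF z(1)] mult_1_left)
    then show ?thesis using g z by simp
  qed
  then have "inj_on (F \<circ> g) (\<psi> ` ball 0 1)"
    by (rule Noshiro_Warschawski[OF \<open>convex (\<psi> ` ball 0 1)\<close>]) (use p_pos g in auto)
  then have "inj_on (F \<circ> g \<circ> \<psi>) (ball 0 1)"
    by (rule comp_inj_on[OF \<open>inj_on \<psi> (ball 0 1)\<close>])
  moreover have "inj_on (F \<circ> g \<circ> \<psi>) (ball 0 1) = inj_on F (ball 0 1)"
    by (rule inj_on_cong) (simp add: g)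
  ultimately show ?thesis by simp
qed

lemma inj_on_if_Re_one_plus_deriv_gt_neg_half:
  assumes L_hol: "L holomorphic_on ball 0 1" and "L 0 = 0"
    and Re_gt: "\<And>z. z \<in> ball 0 1 \<Longrightarrow> Re (1 + z * deriv L z) > -1/2"
    and F_deriv: "\<And>z. z \<in> ball 0 1 \<Longrightarrow> (F has_field_derivative exp (L z)) (at z)"
  shows "inj_on F (ball 0 1)"
proof -
  define M where "M = (\<lambda>z. 2/3 * L z)"
  have M_hol: "M holomorphic_on ball 0 1" unfolding M_def using L_hol by (intro holomorphic_intros)
  have M_Re_pos: "Re (1 + z * deriv M z) > 0" if "z \<in> ball 0 1" for z
  proof -
    have dM: "deriv M z = 2/3 * deriv L z"
      unfolding M_def using L_hol that
      by (intro DERIV_imp_deriv) (auto intro!: derivative_eq_intros holomorphic_derivI)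
    have "1 + z * deriv M z = (1/3) *\<^sub>R 1 + (2/3) *\<^sub>R (1 + z * deriv L z)"
      unfolding dM by (simp add: scaleR_conv_of_real field_simps)
    then have "Re (1 + z * deriv M z) = 1/3 + 2/3 * Re (1 + z * deriv L z)" by simp
    then show ?thesis using Re_gt[OF that] by linarith
  qed
  have "(\<lambda>z. exp (M z)) holomorphic_on ball 0 1" using M_hol by (intro holomorphic_intros)
  then obtain \<psi> where \<psi>: "\<And>z. z \<in> ball 0 1 \<Longrightarrow> (\<psi> has_field_derivative exp (M z)) (at z)"
    using holomorphic_primitive_ball by blast
  interpret convex_mapping M \<psi>
    using M_hol M_Re_pos \<psi> by unfold_locales
  have "M 0 = 0" using \<open>L 0 = 0\<close> by (simp add: M_def)
  \<comment> \<open>\<open>F' = \<psi>' e\<^bsup>M/2\<^esup>\<close> with \<open>Re e\<^bsup>M/2\<^esup> > 0\<close>: \<open>F\<close> is close-to-convex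
    with respect to \<open>\<psi>\<close>\<close>
  have "exp (L z) = deriv \<psi> z * exp (M z / 2)" if "z \<in> ball 0 1" for z
  proof -
    have "L z = M z + M z / 2" by (simp add: M_def)
    then show ?thesis by (simp only: deriv_psi[OF that] exp_add[symmetric])
  qed
  then show ?thesis
    using F_deriv Marx_Strohhacker_weak[OF M_hol \<open>M 0 = 0\<close> M_Re_pos]
    by (intro close_to_convex_inj_on[OF psi_holomorphic inj_on_psi convex_image]) auto
qed

section \<open>The Cesaro transform\<close>

lemma log_deriv_eq_if_exp_eq:
  assumes "open S" "z \<in> S" and exp_Q: "\<And>x. x \<in> S \<Longrightarrow> exp (Q x) = g x"
    and Q_deriv: "(Q has_field_derivative Q') (at z)"
    and g_deriv: "(g has_field_derivative g') (at z)"
  shows "g z * Q' = g'"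
proof -
  have "((\<lambda>x. exp (Q x)) has_field_derivative exp (Q z) * Q') (at z)"
    using Q_deriv by (auto intro!: derivative_eq_intros)
  then have "(g has_field_derivative exp (Q z) * Q') (at z)"
    by (rule has_field_derivative_transform_within_open[OF _ assms(1,2)]) (rule exp_Q)
  then show ?thesis using DERIV_unique[OF _ g_deriv] exp_Q[OF assms(2)] by simp
qed

lemma log_quotient_exists:
  assumes f_hol: "f holomorphic_on ball 0 1" and "f 0 = 0" "deriv f 0 = 1"
    and nonzero: "\<And>z. z \<in> ball 0 1 \<Longrightarrow> z \<noteq> 0 \<Longrightarrow> f z \<noteq> 0"
  obtains Q where "Q holomorphic_on ball 0 1" "Q 0 = 0"
    "\<And>z. z \<in> ball 0 1 \<Longrightarrow> z \<noteq> 0 \<Longrightarrow> exp (Q z) = f z / z"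
    "\<And>z. z \<in> ball 0 1 \<Longrightarrow> z \<noteq> 0 \<Longrightarrow> z * deriv Q z = z * deriv f z / f z - 1"
proof -
  define q where "q = (\<lambda>z. if z = 0 then deriv f 0 else (f z - f 0) / (z - 0))"
  have q_hol: "q holomorphic_on ball 0 1"
    unfolding q_def by (rule pole_lemma[OF f_hol]) simp
  have q_eq: "q z = (if z = 0 then 1 else f z / z)" for z
    using assms(2,3) by (simp add: q_def)
  have "q z \<noteq> 0" if "z \<in> ball 0 1" for z using nonzero[OF that] by (simp add: q_eq)
  then obtain R where R_hol: "R holomorphic_on ball 0 1" and R: "\<And>z. z \<in> ball 0 1 \<Longrightarrow> exp (R z) = q z"
    by (rule holomorphic_logarithm_exists[OF convex_ball open_ball q_hol, of 0]) auto
  define Q where "Q = (\<lambda>z. R z - R 0)"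
  have Q_hol: "Q holomorphic_on ball 0 1" unfolding Q_def using R_hol by (intro holomorphic_intros)
  have "exp (R 0) = 1" using R[of 0] by (simp add: q_eq)
  then have exp_Q: "exp (Q z) = f z / z" if "z \<in> ball 0 1 - {0}" for z
    using R[of z] that by (simp add: Q_def exp_diff q_eq)
  have "z * deriv Q z = z * deriv f z / f z - 1" if z: "z \<in> ball 0 1" "z \<noteq> 0" for z
  proof -
    have "((\<lambda>w. f w / w) has_field_derivative (deriv f z * z - f z) / z\<^sup>2) (at z)"
      using f_hol z by (auto intro!: derivative_eq_intros holomorphic_derivI simp: power2_eq_square)
    then have "f z / z * deriv Q z = (deriv f z * z - f z) / z\<^sup>2"
      using Q_hol z
      by (intro log_deriv_eq_if_exp_eq[of "ball 0 1 - {0}", OF _ _ exp_Q])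
         (auto intro!: holomorphic_derivI)
    then show ?thesis
      using z nonzero[OF z] by (simp add: field_simps power2_eq_square)
  qed
  then show ?thesis using that[OF Q_hol] exp_Q by (simp add: Q_def)
qed

lemma cesaro_integrand_log_exists:
  assumes "f holomorphic_on ball 0 1" "f 0 = 0" "deriv f 0 = 1"
    and "\<And>z. z \<in> ball 0 1 \<Longrightarrow> z \<noteq> 0 \<Longrightarrow> f z \<noteq> 0"
  obtains L where "L holomorphic_on ball 0 1" "L 0 = 0"
    "\<And>w. w \<in> ball 0 1 \<Longrightarrow> w \<noteq> 0 \<Longrightarrow> f w / (w * (1 - w) powr of_real beta) = exp (L w)"
    "\<And>z. z \<in> ball 0 1 \<Longrightarrow> z \<noteq> 0 \<Longrightarrow>
       1 + z * deriv L z = z * deriv f z / f z + beta *\<^sub>R (z / (1 - z))"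
proof -
  obtain Q where Q_hol: "Q holomorphic_on ball 0 1" and "Q 0 = 0"
    and exp_Q: "\<And>z. z \<in> ball 0 1 \<Longrightarrow> z \<noteq> 0 \<Longrightarrow> exp (Q z) = f z / z"
    and Q_deriv: "\<And>z. z \<in> ball 0 1 \<Longrightarrow> z \<noteq> 0 \<Longrightarrow> z * deriv Q z = z * deriv f z / f z - 1"
    using log_quotient_exists[OF assms] by blast
  have slit: "1 - z \<notin> \<real>\<^sub>\<le>\<^sub>0" if "z \<in> ball 0 1" for z :: complex
    using that complex_Re_le_cmod[of z] by (auto simp: complex_nonpos_Reals_iff)
  define L where "L = (\<lambda>z. Q z - of_real beta * Ln (1 - z))"
  show ?thesis
  proof
    show "L holomorphic_on ball 0 1"
      unfolding L_def using Q_hol slit by (intro holomorphic_intros) auto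
    show "L 0 = 0" by (simp add: L_def \<open>Q 0 = 0\<close>)
    fix w :: complex assume w: "w \<in> ball 0 1" "w \<noteq> 0"
    have "1 - w \<noteq> 0" using slit[OF w(1)] by auto
    then show "f w / (w * (1 - w) powr of_real beta) = exp (L w)"
      using exp_Q[OF w] by (simp add: L_def powr_def exp_diff)
    have "(L has_field_derivative deriv Q w + of_real beta / (1 - w)) (at w)"
      unfolding L_def using Q_hol w slit[OF w(1)]
      by (auto intro!: derivative_eq_intros holomorphic_derivI simp: field_simps)
    then show "1 + w * deriv L w = w * deriv f w / f w + beta *\<^sub>R (w / (1 - w))"
      using Q_deriv[OF w] by (simp add: DERIV_imp_deriv scaleR_conv_of_real algebra_simps)
  qed
qed

lemma starlike_cesaro_integrand_log_exists:
  assumes "starlike_of_order lam f" and "0 \<le> beta" "beta \<le> 2 * lam + 1"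
  obtains L where "L holomorphic_on ball 0 1" "L 0 = 0"
    "\<And>w. w \<in> ball 0 1 \<Longrightarrow> w \<noteq> 0 \<Longrightarrow> f w / (w * (1 - w) powr of_real beta) = exp (L w)"
    "\<And>z. z \<in> ball 0 1 \<Longrightarrow> Re (1 + z * deriv L z) > -1/2"
proof -
  have f: "f holomorphic_on ball 0 1" "f 0 = 0" "deriv f 0 = 1"
    "\<And>z. z \<in> ball 0 1 \<Longrightarrow> z \<noteq> 0 \<Longrightarrow> f z \<noteq> 0"
    and starlike: "\<And>z. z \<in> ball 0 1 \<Longrightarrow> z \<noteq> 0 \<Longrightarrow> Re (z * deriv f z / f z) > lam"
    using assms(1) by (auto simp: starlike_of_order_def classA_def)
  obtain L where L: "L holomorphic_on ball 0 1" "L 0 = 0"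
    "\<And>w. w \<in> ball 0 1 \<Longrightarrow> w \<noteq> 0 \<Longrightarrow> f w / (w * (1 - w) powr of_real beta) = exp (L w)"
    and L_deriv: "\<And>z. z \<in> ball 0 1 \<Longrightarrow> z \<noteq> 0 \<Longrightarrow>
       1 + z * deriv L z = z * deriv f z / f z + beta *\<^sub>R (z / (1 - z))"
    using cesaro_integrand_log_exists[OF f, where beta=beta] by blast
  moreover have "Re (1 + z * deriv L z) > -1/2" if z: "z \<in> ball 0 1" for z
  proof (cases "z = 0")
    case False
    have "norm z < 1" "z \<noteq> 1" using z by auto
    then have "Re (z / (1 - z)) > -1/2" using Re_div_one_minus_gt_neg_half_iff by blast
    then have "beta * Re (z / (1 - z)) \<ge> beta * (-1/2)"
      using assms(2) by (intro mult_left_mono) auto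
    then show ?thesis using L_deriv[OF z False] starlike[OF z False] assms(3) by simp
  qed simp
  ultimately show ?thesis using that by blast
qed

lemma cesaro_eq_primitive:
  assumes integrand: "\<And>w. w \<in> ball 0 1 \<Longrightarrow> w \<noteq> 0 \<Longrightarrow> f w / (w * (1 - w) powr of_real beta) = g w"
    and G_deriv: "\<And>w. w \<in> ball 0 1 \<Longrightarrow> (G has_field_derivative g w) (at w)"
    and z: "z \<in> ball 0 1"
  shows "cesaro beta f z = G z - G 0"
proof (cases "z = 0")
  case True
  then show ?thesis by (simp add: cesaro_def)
next
  case False
  have seg: "path_image (linepath 0 z) \<subseteq> ball 0 1"
    using z by (simp add: closed_segment_subset)
  have "cesaro beta f z = contour_integral (linepath 0 z) g"
    unfolding cesaro_def
  proof (rule contour_integral_spike_finite_simple_path[of "{0}"])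
    fix w assume "w \<in> path_image (linepath 0 z) - {0}"
    then show "f w / (w * (1 - w) powr of_real beta) = g w" using seg integrand by auto
  qed (use False in \<open>simp_all add: simple_path_linepath\<close>)
  also have "\<dots> = G z - G 0"
    using contour_integral_primitive[OF _ valid_path_linepath seg, of G g] G_deriv
    by (auto simp: has_field_derivative_at_within intro: contour_integral_unique)
  finally show ?thesis .
qed

lemma classS_if_primitive_injective:
  assumes G_deriv: "\<And>z. z \<in> ball 0 1 \<Longrightarrow> (G has_field_derivative exp (L z)) (at z)"
    and "L 0 = 0" and "inj_on G (ball 0 1)"
    and C: "\<And>z. z \<in> ball 0 1 \<Longrightarrow> C z = G z - G 0"
  shows "classS C"
proof -
  have C_deriv: "(C has_field_derivative exp (L z)) (at z)" if "z \<in> ball 0 1" for z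
  proof -
    have "((\<lambda>z. G z - G 0) has_field_derivative exp (L z)) (at z)"
      using DERIV_diff[OF G_deriv[OF that] DERIV_const[of "G 0"]] by (simp only: diff_zero)
    then show ?thesis
      by (rule has_field_derivative_transform_within_open[OF _ open_ball that]) (simp_all add: C)
  qed
  have "C holomorphic_on ball 0 1"
    unfolding holomorphic_on_open[OF open_ball] using C_deriv by blast
  moreover have "C 0 = 0" using C[of 0] by simp
  moreover have "deriv C 0 = 1" using DERIV_imp_deriv[OF C_deriv[of 0]] \<open>L 0 = 0\<close> by simp
  moreover have "inj_on C (ball 0 1)"
  proof (rule inj_onI)
    fix x y assume xy: "x \<in> ball 0 1" "y \<in> ball 0 1" and "C x = C y"
    have "G x = C x + G 0" using C[OF xy(1)] by simp
    also have "\<dots> = G y" using C[OF xy(2)] \<open>C x = C y\<close> by simp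
    finally show "x = y" using inj_onD[OF \<open>inj_on G (ball 0 1)\<close> _ xy] by blast
  qed
  ultimately show ?thesis by (simp add: classS_def classA_def)
qed

theorem theorem2p7:
  fixes lam beta :: real and f :: "complex \<Rightarrow> complex"
  assumes "-1/2 \<le> lam" and "lam < 1"
    and "0 \<le> beta" and "beta \<le> 2 * lam + 1"
    and "starlike_of_order lam f"
  shows "classS (cesaro beta f)"
proof -
  obtain L where L_hol: "L holomorphic_on ball 0 1" and "L 0 = 0"
    and integrand: "\<And>w. w \<in> ball 0 1 \<Longrightarrow> w \<noteq> 0 \<Longrightarrow> f w / (w * (1 - w) powr of_real beta) = exp (L w)"
    and Re_gt: "\<And>z. z \<in> ball 0 1 \<Longrightarrow> Re (1 + z * deriv L z) > -1/2"
    using starlike_cesaro_integrand_log_exists[OF assms(5,3,4)] by blast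
  have "(\<lambda>z. exp (L z)) holomorphic_on ball 0 1" using L_hol by (intro holomorphic_intros)
  then obtain G where G: "\<And>z. z \<in> ball 0 1 \<Longrightarrow> (G has_field_derivative exp (L z)) (at z)"
    using holomorphic_primitive_ball by blast
  have "inj_on G (ball 0 1)"
    by (rule inj_on_if_Re_one_plus_deriv_gt_neg_half[OF L_hol \<open>L 0 = 0\<close> Re_gt G])
  then show ?thesis
    using classS_if_primitive_injective[OF G \<open>L 0 = 0\<close>] cesaro_eq_primitive[OF integrand G] by blast
qed

end
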